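(* Let $\pi:F^n\to F^d$ be a coordinate projection and let $X\subseteq F^n$ be a $\pi$-special submanifold of dimension $d$. Let $f:X\to F$ be a positive definable continuous function. Then the function $g:\pi(X)\to F$ defined by $g(t)=\inf\{f(x)\;|\;x\in X\cap\pi^{-1}(t)\}$ is a positive definable continuous function.
   Context: Throughout, $\mathcal F=(F,<,+,\cdot,0,1,\ldots)$ is a definably complete locally o-minimal expansion of an ordered field: locally o-minimal means that for every definable $X\subseteq F$ and every $a\in F$ there is an open interval $I\ni a$ such that $X\cap I$ is a finite union of points and open intervals; definably complete means every definable subset of $F$ has a supremum and an infimum in $F\cup\{\pm\infty\}$. "Definable" means definable with parameters. Dimension: for nonempty definable $X\subseteq F^n$, $\dim X$ is the largest $d$ such that $\pi(X)$ has nonempty interior for some coordinate projection $\pi:F^n\to F^d$. Special submanifolds: Let $X\subseteq F^n$ be definable of dimension $d$ and $\pi:F^n\to F^d$ a coordinate projection; after permuting coordinates assume $\pi$ is the projection onto the first $d$ coordinates. First suppose $X\subseteq F^d\times(0,1)^{n-d}$. A point $(a,b)\in F^d\times F^{n-d}$ is $(X,\pi)$-normal if there are definable open neighborhoods $A$ of $a$ in $F^d$ and $B$ of $b$ in $F^{n-d}$ such that either $(A\times B)\cap X=\emptyset$ or $(A\times B)\cap X$ is the graph of a definable continuous map $A\to B$. A point $a\in F^d$ is $(X,\pi)$-good if every point of $\{a\}\times F^{n-d}$ is $(X,\pi)$-normal. For general $X$, fix a definable homeomorphism (indeed $\mathcal C^\infty$ diffeomorphism) $\phi:F\to(0,1)$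 and call $a$ $(X,\pi)$-good if it is $(\psi(X),\pi)$-good, where $\psi=\mathrm{id}_{F^d}\times\phi^{n-d}$. $X$ is a $\pi$-special submanifold if every point of $\pi(X)$ is $(X,\pi)$-good. *)

theory Defs
  imports Main
begin

definition Fn :: "nat \<Rightarrow> 'a list set" where
  "Fn n = {x. length x = n}"

text \<open>The definable sets (with parameters) of an expansion of an ordered field,
  given as a structure in the sense of van den Dries: D n is the collection of
  definable subsets of F^n.\<close>
definition ofield_structure :: "(nat \<Rightarrow> ('a::linordered_field) list set set) \<Rightarrow> bool" where
  "ofield_structure D \<longleftrightarrow>
     (\<forall>n A. A \<in> D n \<longrightarrow> A \<subseteq> Fn n) \<and>
     (\<forall>n. {} \<in> D n) \<and>
     (\<forall>n A B. A \<in> D n \<longrightarrow> B \<in> D n \<longrightarrow> A \<union> B \<in> D n) \<and>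
     (\<forall>n A. A \<in> D n \<longrightarrow> Fn n - A \<in> D n) \<and>
     (\<forall>n A. A \<in> D n \<longrightarrow> {x @ [c] | x c. x \<in> A} \<in> D (Suc n)) \<and>
     (\<forall>n A. A \<in> D n \<longrightarrow> {c # x | x c. x \<in> A} \<in> D (Suc n)) \<and>
     (\<forall>n i j. i < n \<longrightarrow> j < n \<longrightarrow> {x \<in> Fn n. x ! i = x ! j} \<in> D n) \<and>
     (\<forall>n A. A \<in> D (Suc n) \<longrightarrow> butlast ` A \<in> D n) \<and>
     (\<forall>c. {[c]} \<in> D 1) \<and>
     {[a, b] | a b. a < b} \<in> D 2 \<and>
     {[a, b, c] | a b c. c = a + b} \<in> D 3 \<and>
     {[a, b, c] | a b c. c = a * b} \<in> D 3"

definition def_map :: "(nat \<Rightarrow> 'a list set set) \<Rightarrow> nat \<Rightarrow> nat \<Rightarrow> 'a list set \<Rightarrow> ('a list \<Rightarrow> 'a list) \<Rightarrow> bool" where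
  "def_map D n m A h \<longleftrightarrow> (\<forall>x\<in>A. h x \<in> Fn m) \<and> {x @ h x | x. x \<in> A} \<in> D (n + m)"

definition locally_o_minimal :: "(nat \<Rightarrow> ('a::linordered_field) list set set) \<Rightarrow> bool" where
  "locally_o_minimal D \<longleftrightarrow>
     (\<forall>X \<in> D 1. \<forall>a. \<exists>l u. l < a \<and> a < u \<and>
        (\<exists>P Q. finite P \<and> finite Q \<and> (\<forall>(p, q) \<in> Q. p < q) \<and>
           {x. [x] \<in> X} \<inter> {l<..<u} = P \<union> (\<Union>(p, q) \<in> Q. {p<..<q})))"

text \<open>Definable completeness: every definable subset of F has sup and inf in F \<union> {\<plusminus>\<infinity>};
  i.e. a nonempty definable set bounded above (below) has a least upper (greatest lower) bound.\<close>
definition is_sup_of :: "'a::linorder set \<Rightarrow> 'a \<Rightarrow> bool" where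
  "is_sup_of S s \<longleftrightarrow> (\<forall>x\<in>S. x \<le> s) \<and> (\<forall>b. (\<forall>x\<in>S. x \<le> b) \<longrightarrow> s \<le> b)"

definition is_inf_of :: "'a::linorder set \<Rightarrow> 'a \<Rightarrow> bool" where
  "is_inf_of S s \<longleftrightarrow> (\<forall>x\<in>S. s \<le> x) \<and> (\<forall>b. (\<forall>x\<in>S. b \<le> x) \<longrightarrow> b \<le> s)"

definition definably_complete :: "(nat \<Rightarrow> ('a::linordered_field) list set set) \<Rightarrow> bool" where
  "definably_complete D \<longleftrightarrow>
     (\<forall>X \<in> D 1. let S = {x. [x] \<in> X} in
        (S \<noteq> {} \<and> (\<exists>b. \<forall>x\<in>S. x \<le> b) \<longrightarrow> (\<exists>s. is_sup_of S s)) \<and>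
        (S \<noteq> {} \<and> (\<exists>b. \<forall>x\<in>S. b \<le> x) \<longrightarrow> (\<exists>s. is_inf_of S s)))"

text \<open>Order topology on F^n (product topology = max-norm topology).\<close>
definition open_Fn :: "nat \<Rightarrow> ('a::linordered_field) list set \<Rightarrow> bool" where
  "open_Fn n U \<longleftrightarrow> U \<subseteq> Fn n \<and>
     (\<forall>x\<in>U. \<exists>e>0. \<forall>y\<in>Fn n. (\<forall>i<n. \<bar>y ! i - x ! i\<bar> < e) \<longrightarrow> y \<in> U)"

definition continuous_Fn :: "nat \<Rightarrow> nat \<Rightarrow> ('a::linordered_field) list set \<Rightarrow> ('a list \<Rightarrow> 'a list) \<Rightarrow> bool" where
  "continuous_Fn n m A h \<longleftrightarrow>
     (\<forall>a\<in>A. \<forall>e>0. \<exists>\<delta>>0. \<forall>a'\<in>A. (\<forall>i<n. \<bar>a' ! i - a ! i\<bar> < \<delta>) \<longrightarrow>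
        (\<forall>j<m. \<bar>h a' ! j - h a ! j\<bar> < e))"

definition continuous1 :: "('a::linordered_field) set \<Rightarrow> ('a \<Rightarrow> 'a) \<Rightarrow> bool" where
  "continuous1 S f \<longleftrightarrow>
     (\<forall>a\<in>S. \<forall>e>0. \<exists>\<delta>>0. \<forall>x\<in>S. \<bar>x - a\<bar> < \<delta> \<longrightarrow> \<bar>f x - f a\<bar> < e)"

definition proj :: "nat set \<Rightarrow> 'a list \<Rightarrow> 'a list" where
  "proj I x = map (\<lambda>i. x ! i) (sorted_list_of_set I)"

definition coord_proj :: "nat \<Rightarrow> nat \<Rightarrow> nat set \<Rightarrow> bool" where
  "coord_proj n d I \<longleftrightarrow> I \<subseteq> {..<n} \<and> card I = d"

definition has_interior :: "nat \<Rightarrow> ('a::linordered_field) list set \<Rightarrow> bool" where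
  "has_interior n S \<longleftrightarrow> (\<exists>U. open_Fn n U \<and> U \<noteq> {} \<and> U \<subseteq> S)"

definition has_dim :: "nat \<Rightarrow> ('a::linordered_field) list set \<Rightarrow> nat \<Rightarrow> bool" where
  "has_dim n X d \<longleftrightarrow> X \<noteq> {} \<and>
     (\<exists>I. coord_proj n d I \<and> has_interior d (proj I ` X)) \<and>
     (\<forall>I k. coord_proj n k I \<and> has_interior k (proj I ` X) \<longrightarrow> k \<le> d)"

text \<open>(Y,\<pi>_I)-normal points; the point (a,b) is the y with proj I y = a, proj J y = b,
  J the complementary coordinates.\<close>
definition normal_pt :: "(nat \<Rightarrow> ('a::linordered_field) list set set) \<Rightarrow> nat \<Rightarrow> nat set \<Rightarrow> 'a list set
     \<Rightarrow> 'a list \<Rightarrow> 'a list \<Rightarrow> bool" where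
  "normal_pt D n I Y a b \<longleftrightarrow>
     (let d = card I; J = {..<n} - I in
      \<exists>A B. A \<in> D d \<and> open_Fn d A \<and> a \<in> A \<and> B \<in> D (n - d) \<and> open_Fn (n - d) B \<and> b \<in> B \<and>
        ({y \<in> Y. proj I y \<in> A \<and> proj J y \<in> B} = {} \<or>
         (\<exists>h. (\<forall>x\<in>A. h x \<in> B) \<and> def_map D d (n - d) A h \<and> continuous_Fn d (n - d) A h \<and>
              {y \<in> Y. proj I y \<in> A \<and> proj J y \<in> B} =
                {y \<in> Fn n. proj I y \<in> A \<and> proj J y = h (proj I y)})))"

definition psi :: "('a \<Rightarrow> 'a) \<Rightarrow> nat set \<Rightarrow> 'a list \<Rightarrow> 'a list" where
  "psi \<phi> I y = map (\<lambda>k. if k \<in> I then y ! k else \<phi> (y ! k)) [0..<length y]"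

definition good_pt :: "(nat \<Rightarrow> ('a::linordered_field) list set set) \<Rightarrow> ('a \<Rightarrow> 'a) \<Rightarrow> nat \<Rightarrow> nat set
     \<Rightarrow> 'a list set \<Rightarrow> 'a list \<Rightarrow> bool" where
  "good_pt D \<phi> n I X a \<longleftrightarrow>
     (\<forall>b \<in> Fn (n - card I). normal_pt D n I (psi \<phi> I ` X) a b)"

definition special_submanifold :: "(nat \<Rightarrow> ('a::linordered_field) list set set) \<Rightarrow> ('a \<Rightarrow> 'a) \<Rightarrow> nat
     \<Rightarrow> nat set \<Rightarrow> 'a list set \<Rightarrow> bool" where
  "special_submanifold D \<phi> n I X \<longleftrightarrow> (\<forall>a \<in> proj I ` X. good_pt D \<phi> n I X a)"

definition def_homeo_01 :: "(nat \<Rightarrow> ('a::linordered_field) list set set) \<Rightarrow> ('a \<Rightarrow> 'a) \<Rightarrow> bool" where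
  "def_homeo_01 D \<phi> \<longleftrightarrow> {[t, \<phi> t] | t. True} \<in> D 2 \<and> bij_betw \<phi> UNIV {0<..<1} \<and>
     continuous1 UNIV \<phi> \<and> continuous1 {0<..<1} (inv \<phi>)"

end

theory Submission
  imports Defs
begin

text \<open>The infimum exists by definable completeness, and its graph is definable since
  ``\<open>s\<close> is the infimum of the values of \<open>f\<close> over \<open>t\<close>'' is first order in \<open>(t, s)\<close>.
  For positivity and lower semicontinuity at \<open>t0\<close>, change coordinates by \<open>\<psi>\<close>, so that the
  fibre coordinates range over the cube \<open>[0, 1]\<^bsup>n - d\<^esup>\<close>. Normality of every point over
  \<open>t0\<close> gives, around each point of the cube, a box in which \<open>\<psi>(X)\<close> is empty or the graph
  of a continuous map; in both cases \<open>f\<close> stays above \<open>inf - \<epsilon>\<close> on a smaller box. The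
  supremum argument behind definable compactness of the cube makes the size of these boxes
  uniform, which bounds \<open>f\<close> from below over a whole neighbourhood of \<open>t0\<close>. For upper
  semicontinuity, \<open>X\<close> is a continuous graph near a point of the fibre where \<open>f\<close> is almost
  minimal, and this graph provides points over every nearby \<open>t\<close> with almost the same value.\<close>

section \<open>Definable predicates\<close>

definition definable :: "(nat \<Rightarrow> 'a list set set) \<Rightarrow> nat \<Rightarrow> ('a list \<Rightarrow> bool) \<Rightarrow> bool" where
  "definable D n P \<longleftrightarrow> {x \<in> Fn n. P x} \<in> D n"

lemma map_nth_append_upt: "length z = k \<Longrightarrow> length ws = l \<Longrightarrow> map ((!) (z @ ws)) [k..<k + l] = ws"
  by (intro nth_equalityI) (simp_all del: upt_Suc add: nth_append)

lemma is_inf_of_nonempty: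
  fixes s :: "'a::linordered_field"
  assumes "is_inf_of S s"
  shows "S \<noteq> {}"
proof
  assume "S = {}"
  then have "s + 1 \<le> s" using assms unfolding is_inf_of_def by blast
  then show False by simp
qed

lemma is_inf_of_unique: "is_inf_of S a \<Longrightarrow> is_inf_of S b \<Longrightarrow> a = b"
  unfolding is_inf_of_def by (meson order_antisym)

locale definable_sets =
  fixes D :: "nat \<Rightarrow> ('a::linordered_field) list set set"
  assumes ofield: "ofield_structure D"
begin

lemma D_subset_Fn: "A \<in> D n \<Longrightarrow> A \<subseteq> Fn n"
  using ofield unfolding ofield_structure_def by simp

lemma definable_in_D: "A \<in> D n \<Longrightarrow> definable D n (\<lambda>x. x \<in> A)"
proof -
  assume "A \<in> D n"
  moreover from D_subset_Fn[OF this] have "{x \<in> Fn n. x \<in> A} = A" by blast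
  ultimately show ?thesis unfolding definable_def by simp
qed

lemma definable_cong: "definable D n P \<Longrightarrow> (\<And>x. length x = n \<Longrightarrow> P x = Q x) \<Longrightarrow> definable D n Q"
  unfolding definable_def Fn_def by (simp cong: conj_cong)

lemma definable_Not: "definable D n P \<Longrightarrow> definable D n (\<lambda>x. \<not> P x)"
proof -
  assume "definable D n P"
  then have "Fn n - {x \<in> Fn n. P x} \<in> D n"
    using ofield unfolding ofield_structure_def definable_def by simp
  moreover have "Fn n - {x \<in> Fn n. P x} = {x \<in> Fn n. \<not> P x}" by blast
  ultimately show ?thesis unfolding definable_def by simp
qed

lemma definable_disj: "definable D n P \<Longrightarrow> definable D n Q \<Longrightarrow> definable D n (\<lambda>x. P x \<or> Q x)"
proof -
  assume "definable D n P" "definable D n Q"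
  then have "{x \<in> Fn n. P x} \<union> {x \<in> Fn n. Q x} \<in> D n"
    using ofield unfolding ofield_structure_def definable_def by simp
  moreover have "{x \<in> Fn n. P x} \<union> {x \<in> Fn n. Q x} = {x \<in> Fn n. P x \<or> Q x}" by blast
  ultimately show ?thesis unfolding definable_def by simp
qed

lemma definable_conj: "definable D n P \<Longrightarrow> definable D n Q \<Longrightarrow> definable D n (\<lambda>x. P x \<and> Q x)"
  using definable_Not[OF definable_disj[OF definable_Not definable_Not]] by simp

lemma definable_imp: "definable D n P \<Longrightarrow> definable D n Q \<Longrightarrow> definable D n (\<lambda>x. P x \<longrightarrow> Q x)"
  using definable_disj[OF definable_Not] by simp

lemma definable_True: "definable D n (\<lambda>x. True)"
proof -
  have "definable D n (\<lambda>x. False)"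
    using ofield unfolding ofield_structure_def definable_def by simp
  then show ?thesis using definable_Not by fastforce
qed

lemma definable_ex_snoc: "definable D (Suc n) Q \<Longrightarrow> definable D n (\<lambda>x. \<exists>c. Q (x @ [c]))"
proof -
  assume "definable D (Suc n) Q"
  then have "butlast ` {y \<in> Fn (Suc n). Q y} \<in> D n"
    using ofield unfolding ofield_structure_def definable_def by simp
  moreover have "butlast ` {y \<in> Fn (Suc n). Q y} = {x \<in> Fn n. \<exists>c. Q (x @ [c])}"
  proof (rule set_eqI, rule iffI)
    fix x assume "x \<in> butlast ` {y \<in> Fn (Suc n). Q y}"
    then obtain y where y: "length y = Suc n" "Q y" "x = butlast y" unfolding Fn_def by auto
    then have "y \<noteq> []" by auto
    then have "Q (x @ [last y])" using y(2,3) by simp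
    moreover have "length x = n" using y by simp
    ultimately show "x \<in> {x \<in> Fn n. \<exists>c. Q (x @ [c])}" unfolding Fn_def by auto
  next
    fix x assume "x \<in> {x \<in> Fn n. \<exists>c. Q (x @ [c])}"
    then obtain c where "length x = n" "Q (x @ [c])" unfolding Fn_def by auto
    then show "x \<in> butlast ` {y \<in> Fn (Suc n). Q y}" unfolding Fn_def
      by (intro image_eqI[of _ _ "x @ [c]"]) auto
  qed
  ultimately show ?thesis unfolding definable_def by simp
qed

lemma definable_all_snoc: "definable D (Suc n) Q \<Longrightarrow> definable D n (\<lambda>x. \<forall>c. Q (x @ [c]))"
  using definable_Not[OF definable_ex_snoc[OF definable_Not]] by simp

lemma definable_ex_append:
  "definable D (n + k) Q \<Longrightarrow> definable D n (\<lambda>x. \<exists>ys. length ys = k \<and> Q (x @ ys))"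
proof (induction k arbitrary: Q)
  case 0
  then have "definable D n Q" by simp
  then show ?case by (rule definable_cong) simp
next
  case (Suc k)
  have "definable D (n + k) (\<lambda>y. \<exists>c. Q (y @ [c]))" using definable_ex_snoc Suc.prems by simp
  from Suc.IH[OF this] show ?case
  proof (rule definable_cong)
    fix x :: "'a list"
    have "(\<exists>ys c. length ys = k \<and> Q (x @ ys @ [c])) \<longleftrightarrow> (\<exists>ys. length ys = Suc k \<and> Q (x @ ys))"
      by (metis length_Suc_conv_rev)
    then show "(\<exists>ys. length ys = k \<and> (\<exists>c. Q ((x @ ys) @ [c]))) = (\<exists>ys. length ys = Suc k \<and> Q (x @ ys))"
      by simp
  qed
qed

lemma definable_all_less:
  "(\<And>j. j < (k::nat) \<Longrightarrow> definable D n (P j)) \<Longrightarrow> definable D n (\<lambda>x. \<forall>j<k. P j x)"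
proof (induction k)
  case 0
  then show ?case using definable_True by simp
next
  case (Suc k)
  have "definable D n (\<lambda>x. (\<forall>j<k. P j x) \<and> P k x)" using Suc by (intro definable_conj) auto
  then show ?case by (rule definable_cong) (auto simp: less_Suc_eq)
qed

lemma definable_nth_eq_nth: "i < n \<Longrightarrow> j < n \<Longrightarrow> definable D n (\<lambda>x. x ! i = x ! j)"
  using ofield unfolding ofield_structure_def definable_def by simp

lemma definable_tl: "definable D n P \<Longrightarrow> definable D (Suc n) (\<lambda>y. P (tl y))"
proof -
  assume "definable D n P"
  then have "{c # x | x c. x \<in> {x \<in> Fn n. P x}} \<in> D (Suc n)"
    using ofield unfolding ofield_structure_def definable_def by meson
  moreover have "{c # x | x c. x \<in> {x \<in> Fn n. P x}} = {y \<in> Fn (Suc n). P (tl y)}"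
  proof (rule set_eqI, rule iffI)
    fix y assume "y \<in> {y \<in> Fn (Suc n). P (tl y)}"
    then have y: "length y = Suc n" "P (tl y)" unfolding Fn_def by auto
    then have "y = hd y # tl y" by (cases y) auto
    then show "y \<in> {c # x | x c. x \<in> {x \<in> Fn n. P x}}" using y unfolding Fn_def
      by (intro CollectI exI[of _ "tl y"] exI[of _ "hd y"]) auto
  qed (auto simp: Fn_def)
  ultimately show ?thesis unfolding definable_def by simp
qed

lemma definable_drop: "definable D n P \<Longrightarrow> definable D (k + n) (\<lambda>y. P (drop k y))"
proof (induction k)
  case (Suc k)
  from definable_tl[OF Suc.IH[OF Suc.prems]] show ?case
    by (simp add: drop_Suc tl_drop)
qed simp

text \<open>Substituting coordinates: the new coordinates are appended as existentially quantified
  variables tied to the old ones by diagonal equations.\<close>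
lemma definable_reindex:
  assumes P: "definable D k P" and len: "length is = k" and bd: "\<forall>i\<in>set is. i < n"
  shows "definable D n (\<lambda>x. P (map (nth x) is))"
proof -
  have "definable D (n + k) (\<lambda>y. P (drop n y) \<and> (\<forall>j<k. y ! (is ! j) = y ! (n + j)))"
  proof (rule definable_conj)
    show "definable D (n + k) (\<lambda>y. P (drop n y))"
      using definable_drop[OF P, of n] by (simp add: add.commute)
    show "definable D (n + k) (\<lambda>y. \<forall>j<k. y ! (is ! j) = y ! (n + j))"
      using bd len nth_mem by (intro definable_all_less definable_nth_eq_nth) fastforce+
  qed
  from definable_ex_append[OF this] show ?thesis
  proof (rule definable_cong)
    fix x :: "'a list" assume lx: "length x = n"
    have is_lt: "j < k \<Longrightarrow> is ! j < n" for j using bd len nth_mem by blast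
    have forced: "ys = map ((!) x) is"
      if "length ys = k" "\<forall>j<k. (x @ ys) ! (is ! j) = (x @ ys) ! (n + j)" for ys
      using that is_lt lx len by (intro nth_equalityI) (auto simp: nth_append)
    have witness: "\<forall>j<k. (x @ map ((!) x) is) ! (is ! j) = (x @ map ((!) x) is) ! (n + j)"
      using is_lt lx len by (simp add: nth_append)
    show "(\<exists>ys. length ys = k \<and> P (drop n (x @ ys)) \<and>
        (\<forall>j<k. (x @ ys) ! (is ! j) = (x @ ys) ! (n + j))) = P (map ((!) x) is)"
    proof
      assume "\<exists>ys. length ys = k \<and> P (drop n (x @ ys)) \<and> (\<forall>j<k. (x @ ys) ! (is ! j) = (x @ ys) ! (n + j))"
      then obtain ys where "length ys = k" "P ys" "\<forall>j<k. (x @ ys) ! (is ! j) = (x @ ys) ! (n + j)"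
        using lx by auto
      then show "P (map ((!) x) is)" using forced by simp
    next
      assume "P (map ((!) x) is)"
      then show "\<exists>ys. length ys = k \<and> P (drop n (x @ ys)) \<and> (\<forall>j<k. (x @ ys) ! (is ! j) = (x @ ys) ! (n + j))"
        using witness lx len by (intro exI[of _ "map ((!) x) is"]) simp
    qed
  qed
qed

lemma definable_map_nth_mem:
  "A \<in> D k \<Longrightarrow> length is = k \<Longrightarrow> \<forall>i\<in>set is. i < n \<Longrightarrow> definable D n (\<lambda>x. map (nth x) is \<in> A)"
  by (rule definable_reindex[OF definable_in_D])

lemma definable_nth_eq_const: "i < n \<Longrightarrow> definable D n (\<lambda>x. x ! i = c)"
proof -
  assume i: "i < n"
  have "{[c]} \<in> D 1" using ofield unfolding ofield_structure_def by simp
  then have "definable D n (\<lambda>x. map ((!) x) [i] \<in> {[c]})"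
    by (rule definable_map_nth_mem) (use i in auto)
  then show ?thesis by (rule definable_cong) auto
qed

lemma definable_nth_less_nth: "i < n \<Longrightarrow> j < n \<Longrightarrow> definable D n (\<lambda>x. x ! i < x ! j)"
proof -
  assume ij: "i < n" "j < n"
  have "{[a, b] | a b. a < b} \<in> D 2" using ofield unfolding ofield_structure_def by simp
  then have "definable D n (\<lambda>x. map ((!) x) [i, j] \<in> {[a, b] | a b. a < b})"
    by (rule definable_map_nth_mem) (use ij in auto)
  then show ?thesis by (rule definable_cong) auto
qed

lemma definable_nth_eq_add:
  "i < n \<Longrightarrow> j < n \<Longrightarrow> k < n \<Longrightarrow> definable D n (\<lambda>x. x ! k = x ! i + x ! j)"
proof -
  assume ijk: "i < n" "j < n" "k < n"
  have "{[a, b, c] | a b c. c = a + b} \<in> D 3" using ofield unfolding ofield_structure_def by simp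
  then have "definable D n (\<lambda>x. map ((!) x) [i, j, k] \<in> {[a, b, c] | a b c. c = a + b})"
    by (rule definable_map_nth_mem) (use ijk in auto)
  then show ?thesis by (rule definable_cong) auto
qed

lemma definable_snoc_const: "definable D (Suc n) Q \<Longrightarrow> definable D n (\<lambda>x. Q (x @ [c]))"
proof -
  assume "definable D (Suc n) Q"
  then have "definable D (Suc n) (\<lambda>y. y ! n = c \<and> Q y)"
    by (intro definable_conj definable_nth_eq_const) auto
  from definable_ex_snoc[OF this] show ?thesis by (rule definable_cong) auto
qed

lemma definable_append_const: "definable D (n + length u) Q \<Longrightarrow> definable D n (\<lambda>x. Q (x @ u))"
proof (induction u arbitrary: Q rule: rev_induct)
  case (snoc c u)
  have "definable D (n + length u) (\<lambda>y. Q (y @ [c]))"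
    using definable_snoc_const[of "n + length u" Q c] snoc.prems by simp
  from snoc.IH[OF this] show ?case by simp
qed simp

lemma definable_nth_less_add:
  "i < n \<Longrightarrow> j < n \<Longrightarrow> k < n \<Longrightarrow> definable D n (\<lambda>x. x ! i < x ! j + x ! k)"
proof -
  assume ijk: "i < n" "j < n" "k < n"
  have "definable D (Suc n) (\<lambda>y. y ! n = y ! j + y ! k \<and> y ! i < y ! n)"
    using ijk by (intro definable_conj definable_nth_eq_add definable_nth_less_nth) auto
  from definable_ex_snoc[OF this] show ?thesis
    by (rule definable_cong) (use ijk in \<open>auto simp: nth_append\<close>)
qed

lemma definable_nth_less_const: "i < n \<Longrightarrow> definable D n (\<lambda>x. x ! i < c)"
proof -
  assume i: "i < n"
  have "definable D (Suc n) (\<lambda>y. y ! i < y ! n)" using i by (intro definable_nth_less_nth) auto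
  from definable_snoc_const[OF this, of c] show ?thesis
    by (rule definable_cong) (use i in \<open>auto simp: nth_append\<close>)
qed

lemma definable_const_less_nth: "i < n \<Longrightarrow> definable D n (\<lambda>x. c < x ! i)"
proof -
  assume i: "i < n"
  have "definable D (Suc n) (\<lambda>y. y ! n < y ! i)" using i by (intro definable_nth_less_nth) auto
  from definable_snoc_const[OF this, of c] show ?thesis
    by (rule definable_cong) (use i in \<open>auto simp: nth_append\<close>)
qed

lemma definable_nth_le_nth: "i < n \<Longrightarrow> j < n \<Longrightarrow> definable D n (\<lambda>x. x ! i \<le> x ! j)"
  using definable_Not[OF definable_nth_less_nth[of j n i]] by (simp add: not_less)

lemma definable_nth_le_const: "i < n \<Longrightarrow> definable D n (\<lambda>x. x ! i \<le> c)"
  using definable_Not[OF definable_const_less_nth[of i n c]] by (simp add: not_less)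

lemma definable_const_le_nth: "i < n \<Longrightarrow> definable D n (\<lambda>x. c \<le> x ! i)"
  using definable_Not[OF definable_nth_less_const[of i n c]] by (simp add: not_less)

lemma definable_abs_diff_less:
  "p < n \<Longrightarrow> j < n \<Longrightarrow> q < n \<Longrightarrow> definable D n (\<lambda>x. \<bar>x ! p - x ! j\<bar> < x ! q)"
proof -
  assume "p < n" "j < n" "q < n"
  then have "definable D n (\<lambda>x. x ! p < x ! j + x ! q \<and> x ! j < x ! p + x ! q)"
    by (intro definable_conj definable_nth_less_add) auto
  then show ?thesis by (rule definable_cong) (auto simp: abs_less_iff algebra_simps)
qed

lemma definable_abs_diff_const_less:
  "p < n \<Longrightarrow> q < n \<Longrightarrow> definable D n (\<lambda>x. \<bar>x ! p - c\<bar> < x ! q)"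
proof -
  assume pq: "p < n" "q < n"
  have "definable D (Suc n) (\<lambda>y. \<bar>y ! p - y ! n\<bar> < y ! q)"
    using pq by (intro definable_abs_diff_less) auto
  from definable_snoc_const[OF this, of c] show ?thesis
    by (rule definable_cong) (use pq in \<open>auto simp: nth_append\<close>)
qed

lemma definable_const_add_le: "i < n \<Longrightarrow> k < n \<Longrightarrow> definable D n (\<lambda>x. c + x ! i \<le> x ! k)"
proof -
  assume ik: "i < n" "k < n"
  have "definable D (Suc n) (\<lambda>y. \<not> y ! k < y ! n + y ! i)"
    using ik by (intro definable_Not definable_nth_less_add) auto
  from definable_snoc_const[OF this, of c] show ?thesis
    by (rule definable_cong) (use ik in \<open>auto simp: nth_append not_less\<close>)
qed

lemma definable_fix_prefix:
  assumes P: "definable D (k + l) P" and t: "length t = k"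
  shows "definable D l (\<lambda>z. P (t @ z))"
proof -
  have "definable D (l + k) (\<lambda>y. P (map ((!) y) ([l..<l + k] @ [0..<l])))"
    by (rule definable_reindex[OF P]) auto
  then have "definable D (l + k) (\<lambda>y. P (drop l y @ take l y))"
  proof (rule definable_cong)
    fix y :: "'a list" assume "length y = l + k"
    moreover from this have "map ((!) y) [l..<l + k] = drop l y" "map ((!) y) [0..<l] = take l y"
      by (auto intro!: nth_equalityI simp del: upt_Suc)
    ultimately show "P (map ((!) y) ([l..<l + k] @ [0..<l])) = P (drop l y @ take l y)" by simp
  qed
  from definable_append_const[of l t, unfolded t, OF this] show ?thesis
    by (rule definable_cong) simp
qed

lemma definable_move_last:
  assumes Q: "definable D (Suc N) (\<lambda>y. Q (take N y) (y ! N))" and "N \<le> M"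
  shows "definable D (Suc M) (\<lambda>y. Q (take N y) (y ! M))"
proof -
  have "definable D (Suc M) (\<lambda>y. Q (take N (map ((!) y) ([0..<N] @ [M]))) (map ((!) y) ([0..<N] @ [M]) ! N))"
    by (rule definable_reindex[OF Q]) (use \<open>N \<le> M\<close> in auto)
  then show ?thesis
  proof (rule definable_cong)
    fix y :: "'a list" assume "length y = Suc M"
    moreover have "map ((!) y) [0..<N] = take N y" using \<open>N \<le> M\<close> \<open>length y = Suc M\<close>
      by (intro nth_equalityI) auto
    ultimately show "Q (take N (map ((!) y) ([0..<N] @ [M]))) (map ((!) y) ([0..<N] @ [M]) ! N) =
        Q (take N y) (y ! M)"
      using \<open>N \<le> M\<close> by (simp add: nth_append min_absorb2)
  qed
qed

lemma definable_is_inf_of: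
  assumes Q: "definable D (Suc N) (\<lambda>y. Q (take N y) (y ! N))"
  shows "definable D (Suc N) (\<lambda>y. is_inf_of {v. Q (take N y) v} (y ! N))"
proof -
  have "definable D (Suc (Suc N)) (\<lambda>y. Q (take N y) (y ! Suc N) \<longrightarrow> y ! N \<le> y ! Suc N)"
    by (intro definable_imp definable_move_last[OF Q] definable_nth_le_nth) auto
  from definable_all_snoc[OF this]
  have lower: "definable D (Suc N) (\<lambda>y. \<forall>v. Q (take N y) v \<longrightarrow> y ! N \<le> v)"
    by (rule definable_cong) (auto simp: nth_append)
  have "definable D (Suc (Suc (Suc N)))
      (\<lambda>y. Q (take N y) (y ! Suc (Suc N)) \<longrightarrow> y ! Suc N \<le> y ! Suc (Suc N))"
    by (intro definable_imp definable_move_last[OF Q] definable_nth_le_nth) auto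
  from definable_all_snoc[OF this]
  have "definable D (Suc (Suc N)) (\<lambda>y. (\<forall>v. Q (take N y) v \<longrightarrow> y ! Suc N \<le> v) \<longrightarrow> y ! Suc N \<le> y ! N)"
    by (intro definable_imp definable_nth_le_nth, rule definable_cong) (auto simp: nth_append)
  from definable_all_snoc[OF this]
  have greatest: "definable D (Suc N) (\<lambda>y. \<forall>b. (\<forall>v. Q (take N y) v \<longrightarrow> b \<le> v) \<longrightarrow> b \<le> y ! N)"
    by (rule definable_cong) (auto simp: nth_append)
  from definable_conj[OF lower greatest] show ?thesis
    by (rule definable_cong) (auto simp: is_inf_of_def)
qed
end

section \<open>Definable completeness and compactness of the unit cube\<close>

definition unit_cube :: "nat \<Rightarrow> ('a::linordered_field) list set" where
  "unit_cube m = {b. length b = m \<and> (\<forall>i<m. 0 \<le> b ! i \<and> b ! i \<le> 1)}"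

lemma unit_cube_0: "unit_cube 0 = {[]}"
  unfolding unit_cube_def by auto

lemma unit_cube_Suc_iff:
  "b \<in> unit_cube (Suc m) \<longleftrightarrow> (\<exists>u v. b = u @ [v] \<and> u \<in> unit_cube m \<and> 0 \<le> v \<and> v \<le> 1)"
proof
  assume b: "b \<in> unit_cube (Suc m)"
  then have "b \<noteq> []" unfolding unit_cube_def by auto
  then have bb: "b = butlast b @ [last b]" by simp
  have lb: "length (butlast b) = m" using b unfolding unit_cube_def by auto
  have "butlast b ! i = b ! i" if "i < m" for i using that lb by (simp add: nth_butlast)
  then have "butlast b \<in> unit_cube m" using b lb unfolding unit_cube_def by auto
  moreover have "b ! m = last b" using bb lb by (metis nth_append_length)
  ultimately show "\<exists>u v. b = u @ [v] \<and> u \<in> unit_cube m \<and> 0 \<le> v \<and> v \<le> 1"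
    using b bb unfolding unit_cube_def by (intro exI[of _ "butlast b"] exI[of _ "last b"]) auto
next
  assume "\<exists>u v. b = u @ [v] \<and> u \<in> unit_cube m \<and> 0 \<le> v \<and> v \<le> 1"
  then show "b \<in> unit_cube (Suc m)" unfolding unit_cube_def by (auto simp: nth_append less_Suc_eq)
qed

locale definably_complete_sets = definable_sets +
  assumes complete: "definably_complete D"
begin

lemma definable_has_sup:
  assumes "definable D 1 (\<lambda>z. P (z ! 0))" "P x0" "\<forall>x. P x \<longrightarrow> x \<le> b"
  shows "\<exists>s. is_sup_of {x. P x} s"
proof -
  have "{z \<in> Fn 1. P (z ! 0)} \<in> D 1" using assms(1) unfolding definable_def .
  note bounds = complete[unfolded definably_complete_def, THEN bspec, OF this]
  have "{x. [x] \<in> {z \<in> Fn 1. P (z ! 0)}} = {x. P x}" unfolding Fn_def by auto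
  note bounds = bounds[unfolded Let_def this, THEN conjunct1]
  show ?thesis using bounds assms(2,3) by blast
qed

lemma definable_has_inf:
  assumes "definable D 1 (\<lambda>z. P (z ! 0))" "P x0" "\<forall>x. P x \<longrightarrow> b \<le> x"
  shows "\<exists>s. is_inf_of {x. P x} s"
proof -
  have "{z \<in> Fn 1. P (z ! 0)} \<in> D 1" using assms(1) unfolding definable_def .
  note bounds = complete[unfolded definably_complete_def, THEN bspec, OF this]
  have "{x. [x] \<in> {z \<in> Fn 1. P (z ! 0)}} = {x. P x}" unfolding Fn_def by auto
  note bounds = bounds[unfolded Let_def this, THEN conjunct2]
  show ?thesis using bounds assms(2,3) by blast
qed

lemma definable_uniform_on_initial_segment:
  assumes "definable D 2 (\<lambda>z. E (z ! 0) (z ! 1))"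
  shows "definable D 1 (\<lambda>z. 0 \<le> z ! 0 \<and> z ! 0 \<le> 1 \<and>
           (\<exists>r>0. \<forall>v. 0 \<le> v \<longrightarrow> v \<le> z ! 0 \<longrightarrow> E v r))"
proof -
  have "definable D (Suc (Suc (Suc 0))) (\<lambda>y. (\<lambda>z. E (z ! 0) (z ! 1)) (map ((!) y) [2, 1]))"
    by (rule definable_reindex[OF assms[simplified numeral_2_eq_2]]) auto
  then have "definable D (Suc (Suc (Suc 0))) (\<lambda>y. 0 \<le> y ! 2 \<and> y ! 2 \<le> y ! 0 \<longrightarrow> E (y ! 2) (y ! 1))"
    by (intro definable_imp definable_conj definable_const_le_nth definable_nth_le_nth) auto
  from definable_all_snoc[OF this]
  have "definable D (Suc (Suc 0)) (\<lambda>y. \<forall>v. 0 \<le> v \<longrightarrow> v \<le> y ! 0 \<longrightarrow> E v (y ! 1))"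
    by (rule definable_cong) (auto simp: nth_append)
  then have "definable D (Suc (Suc 0)) (\<lambda>y. 0 < y ! 1 \<and> (\<forall>v. 0 \<le> v \<longrightarrow> v \<le> y ! 0 \<longrightarrow> E v (y ! 1)))"
    by (intro definable_conj definable_const_less_nth) auto
  from definable_ex_snoc[OF this]
  have "definable D (Suc 0) (\<lambda>z. \<exists>r>0. \<forall>v. 0 \<le> v \<longrightarrow> v \<le> z ! 0 \<longrightarrow> E v r)"
    by (rule definable_cong) (auto simp: nth_append)
  then have "definable D (Suc 0) (\<lambda>z. 0 \<le> z ! 0 \<and> z ! 0 \<le> 1 \<and>
           (\<exists>r>0. \<forall>v. 0 \<le> v \<longrightarrow> v \<le> z ! 0 \<longrightarrow> E v r))"
    by (intro definable_conj definable_const_le_nth definable_nth_le_const) auto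
  then show ?thesis by simp
qed

text \<open>Definable compactness of \<open>[0, 1]\<close>: the supremum of the \<open>s\<close> for which a radius
  works uniformly on \<open>[0, s]\<close> must be \<open>1\<close> and is attained, since the radius available at the
  supremum itself extends any good \<open>[0, s]\<close> a little beyond it.\<close>
lemma uniform_radius_unit_interval:
  assumes def: "definable D 2 (\<lambda>z. E (z ! 0) (z ! 1))"
    and shrink: "\<And>v r r'. E v r \<Longrightarrow> 0 < r' \<Longrightarrow> r' \<le> r \<Longrightarrow> E v r'"
    and stable: "\<And>v v' r s. E v r \<Longrightarrow> 0 < s \<Longrightarrow> \<bar>v' - v\<bar> + s \<le> r \<Longrightarrow> E v' s"
    and local: "\<And>v. 0 \<le> v \<Longrightarrow> v \<le> 1 \<Longrightarrow> \<exists>r>0. E v r"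
  shows "\<exists>r>0. \<forall>v. 0 \<le> v \<longrightarrow> v \<le> 1 \<longrightarrow> E v r"
proof -
  define S where "S s \<longleftrightarrow> 0 \<le> s \<and> s \<le> 1 \<and> (\<exists>r>0. \<forall>v. 0 \<le> v \<longrightarrow> v \<le> s \<longrightarrow> E v r)" for s
  have "definable D 1 (\<lambda>z. S (z ! 0))"
    unfolding S_def by (rule definable_uniform_on_initial_segment[OF def])
  moreover have "S 0" using local[of 0] unfolding S_def by force
  ultimately obtain ss where sup: "is_sup_of {s. S s} ss"
    using definable_has_sup[of S 0 1] unfolding S_def by auto
  have ss: "0 \<le> ss" "ss \<le> 1" using sup \<open>S 0\<close> unfolding is_sup_of_def S_def by auto
  obtain rr where rr: "rr > 0" "E ss rr" using local[OF ss] by auto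
  have "\<exists>s. S s \<and> ss - rr / 2 < s"
  proof (rule ccontr)
    assume "\<nexists>s. S s \<and> ss - rr / 2 < s"
    then have "\<forall>x\<in>{s. S s}. x \<le> ss - rr / 2" by (auto simp: not_less)
    then have "ss \<le> ss - rr / 2" using sup unfolding is_sup_of_def by blast
    then show False using rr by simp
  qed
  then obtain s where s: "S s" "ss - rr / 2 < s" by blast
  then obtain rs where rs: "rs > 0" "\<forall>v. 0 \<le> v \<longrightarrow> v \<le> s \<longrightarrow> E v rs" unfolding S_def by auto
  define s' where "s' = min 1 (ss + rr / 4)"
  define r' where "r' = min rs (rr / 2)"
  have r': "r' > 0" using rs rr unfolding r'_def by simp
  have all_v: "E v r'" if v: "0 \<le> v" "v \<le> s'" for v
  proof (cases "v \<le> s")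
    case True
    then show ?thesis using rs v shrink[of v rs r'] r' unfolding r'_def by auto
  next
    case False
    then have "\<bar>v - ss\<bar> + rr / 2 \<le> rr" using s v unfolding s'_def by (auto simp: abs_if)
    then have "E v (rr / 2)" using stable[OF rr(2), of "rr / 2" v] rr by simp
    then show ?thesis using shrink[of v "rr / 2" r'] r' unfolding r'_def by auto
  qed
  then have "S s'" unfolding S_def using r' ss rr unfolding s'_def by auto
  then have "s' \<le> ss" using sup unfolding is_sup_of_def by auto
  then have "s' = 1" using ss rr unfolding s'_def by (auto simp: min_def split: if_splits)
  then show ?thesis using all_v r' by auto
qed

lemma definable_all_unit_last:
  assumes def: "definable D (Suc (Suc m)) (\<lambda>z. E (take (Suc m) z) (z ! Suc m))"
  shows "definable D (Suc m) (\<lambda>z. \<forall>v. 0 \<le> v \<longrightarrow> v \<le> 1 \<longrightarrow> E (take m z @ [v]) (z ! m))"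
proof -
  let ?is = "[0..<m] @ [Suc m, m]"
  have "definable D (Suc (Suc m)) (\<lambda>y. (\<lambda>z. E (take (Suc m) z) (z ! Suc m)) (map ((!) y) ?is))"
    by (rule definable_reindex[OF def]) auto
  then have "definable D (Suc (Suc m)) (\<lambda>y. E (take m y @ [y ! Suc m]) (y ! m))"
  proof (rule definable_cong)
    fix y :: "'a list" assume y: "length y = Suc (Suc m)"
    then have "map ((!) y) [0..<m] = take m y" by (intro nth_equalityI) auto
    then show "E (take (Suc m) (map ((!) y) ?is)) (map ((!) y) ?is ! Suc m) =
        E (take m y @ [y ! Suc m]) (y ! m)"
      using y by (simp add: nth_append)
  qed
  then have "definable D (Suc (Suc m))
      (\<lambda>y. 0 \<le> y ! Suc m \<longrightarrow> y ! Suc m \<le> 1 \<longrightarrow> E (take m y @ [y ! Suc m]) (y ! m))"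
    by (intro definable_imp definable_const_le_nth definable_nth_le_const) auto
  from definable_all_snoc[OF this] show ?thesis
    by (rule definable_cong) (auto simp: nth_append)
qed

lemma uniform_radius_along_last:
  assumes def: "definable D (Suc (Suc m)) (\<lambda>z. E (take (Suc m) z) (z ! Suc m))"
    and shrink: "\<And>b r r'. E b r \<Longrightarrow> 0 < r' \<Longrightarrow> r' \<le> r \<Longrightarrow> E b r'"
    and stable: "\<And>b b' r s. length b = Suc m \<Longrightarrow> length b' = Suc m \<Longrightarrow> E b r \<Longrightarrow> 0 < s \<Longrightarrow>
           s \<le> r \<Longrightarrow> \<forall>i<Suc m. \<bar>b' ! i - b ! i\<bar> + s \<le> r \<Longrightarrow> E b' s"
    and u: "length u = m" and local: "\<And>v. 0 \<le> v \<Longrightarrow> v \<le> 1 \<Longrightarrow> \<exists>r>0. E (u @ [v]) r"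
  shows "\<exists>r>0. \<forall>v. 0 \<le> v \<longrightarrow> v \<le> 1 \<longrightarrow> E (u @ [v]) r"
proof -
  have "definable D (m + 2) (\<lambda>z. E (take (Suc m) z) (z ! Suc m))"
    using def by (simp add: numeral_2_eq_2)
  from definable_fix_prefix[OF this u]
  have "definable D 2 (\<lambda>z. E (u @ [z ! 0]) (z ! 1))"
    by (rule definable_cong) (auto simp: nth_append u numeral_2_eq_2 take_Suc_conv_app_nth)
  then show ?thesis
  proof (rule uniform_radius_unit_interval)
    show "E (u @ [v]) r'" if "E (u @ [v]) r" "0 < r'" "r' \<le> r" for v r r'
      using that shrink by blast
    show "E (u @ [v']) s" if "E (u @ [v]) r" "0 < s" "\<bar>v' - v\<bar> + s \<le> r" for v v' r s
    proof -
      have "s \<le> r" using that(3) abs_ge_zero[of "v' - v"] by linarith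
      then show ?thesis using that u stable[of "u @ [v]" "u @ [v']" r s]
        by (auto simp: nth_append less_Suc_eq)
    qed
  qed (rule local)
qed

text \<open>Definable compactness of the unit cube, by induction on the dimension: a uniform radius
  along the last coordinate is again a radius property of the remaining coordinates.\<close>
lemma uniform_radius_unit_cube:
  assumes "definable D (Suc m) (\<lambda>z. E (take m z) (z ! m))"
    and "\<And>b r r'. E b r \<Longrightarrow> 0 < r' \<Longrightarrow> r' \<le> r \<Longrightarrow> E b r'"
    and "\<And>b b' r s. length b = m \<Longrightarrow> length b' = m \<Longrightarrow> E b r \<Longrightarrow> 0 < s \<Longrightarrow> s \<le> r \<Longrightarrow>
           \<forall>i<m. \<bar>b' ! i - b ! i\<bar> + s \<le> r \<Longrightarrow> E b' s"
    and "\<And>b. b \<in> unit_cube m \<Longrightarrow> \<exists>r>0. E b r"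
  shows "\<exists>r>0. \<forall>b\<in>unit_cube m. E b r"
  using assms
proof (induction m arbitrary: E)
  case 0
  have "[] \<in> unit_cube 0" by (simp add: unit_cube_0)
  then obtain r where "r > 0" "E [] r" using "0.prems"(4) by blast
  then show ?case unfolding unit_cube_0 by blast
next
  case (Suc m)
  note def = Suc.prems(1) and shrink = Suc.prems(2) and stable = Suc.prems(3)
    and local = Suc.prems(4)
  define E' where "E' u r \<longleftrightarrow> (\<forall>v. 0 \<le> v \<longrightarrow> v \<le> 1 \<longrightarrow> E (u @ [v]) r)" for u r
  have "\<exists>r>0. \<forall>u\<in>unit_cube m. E' u r"
  proof (rule Suc.IH)
    show "definable D (Suc m) (\<lambda>z. E' (take m z) (z ! m))"
      unfolding E'_def by (rule definable_all_unit_last[OF def])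
    show "E' b r'" if "E' b r" "0 < r'" "r' \<le> r" for b r r'
      using that shrink unfolding E'_def by blast
    show "E' b' s" if "length b = m" "length b' = m" "E' b r" "0 < s" "s \<le> r"
      "\<forall>i<m. \<bar>b' ! i - b ! i\<bar> + s \<le> r" for b b' r s
      unfolding E'_def
    proof (intro allI impI)
      fix v :: 'a assume v: "0 \<le> v" "v \<le> 1"
      have "E (b @ [v]) r" using that(3) v unfolding E'_def by blast
      moreover have "\<forall>i<Suc m. \<bar>(b' @ [v]) ! i - (b @ [v]) ! i\<bar> + s \<le> r"
        using that by (auto simp: nth_append less_Suc_eq)
      ultimately show "E (b' @ [v]) s" using stable[of "b @ [v]" "b' @ [v]" r s] that by simp
    qed
    show "\<exists>r>0. E' u r" if u: "u \<in> unit_cube m" for u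
      unfolding E'_def
    proof (rule uniform_radius_along_last[OF def])
      show "E b r'" if "E b r" "0 < r'" "r' \<le> r" for b r r'
        using that by (rule shrink)
      show "E b' s" if "length b = Suc m" "length b' = Suc m" "E b r" "0 < s" "s \<le> r"
        "\<forall>i<Suc m. \<bar>b' ! i - b ! i\<bar> + s \<le> r" for b b' r s
        using that by (rule stable)
      show "length u = m" using u unfolding unit_cube_def by simp
      show "\<exists>r>0. E (u @ [v]) r" if "0 \<le> v" "v \<le> 1" for v
        using local u that unit_cube_Suc_iff by blast
    qed
  qed
  then obtain r where "r > 0" "\<forall>u\<in>unit_cube m. E' u r" by blast
  then show ?case unfolding E'_def by (metis unit_cube_Suc_iff)
qed
end

section \<open>Coordinate projections\<close>

lemma open_Fn_cube_nbhd:
  "open_Fn d A \<Longrightarrow> a \<in> A \<Longrightarrow> \<exists>e>0. \<forall>y. length y = d \<longrightarrow> (\<forall>i<d. \<bar>y ! i - a ! i\<bar> < e) \<longrightarrow> y \<in> A"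
  unfolding open_Fn_def Fn_def by blast

lemma ex_pos_forall_less:
  assumes "\<And>j. j < (m::nat) \<Longrightarrow> \<exists>e>0. P j (e::'a::linordered_field)"
    and "\<And>j e e'. P j e \<Longrightarrow> 0 < e' \<Longrightarrow> e' \<le> e \<Longrightarrow> P j e'"
  shows "\<exists>e>0. \<forall>j<m. P j e"
  using assms(1)
proof (induction m)
  case 0
  then show ?case by (intro exI[of _ 1]) auto
next
  case (Suc m)
  obtain e1 where e1: "e1 > 0" "\<forall>j<m. P j e1" using Suc by auto
  obtain e2 where e2: "e2 > 0" "P m e2" using Suc.prems[of m] by auto
  have "P j (min e1 e2)" if "j < Suc m" for j
    using that assms(2) e1 e2 by (cases "j < m") (auto simp: less_Suc_eq)
  then show ?case using e1 e2 by (intro exI[of _ "min e1 e2"]) auto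
qed

locale coordinate_split =
  fixes n d :: nat and I :: "nat set"
  assumes coord_proj: "coord_proj n d I"
begin

abbreviation "m \<equiv> n - d"
abbreviation "J \<equiv> {..<n} - I"
abbreviation "Is \<equiv> sorted_list_of_set I"
abbreviation "Js \<equiv> sorted_list_of_set J"

lemma I_subset: "I \<subseteq> {..<n}" and card_I: "card I = d"
  using coord_proj unfolding coord_proj_def by auto

lemma length_Is: "length Is = d"
  using card_I by simp

lemma length_Js: "length Js = m"
  using card_I I_subset finite_subset[OF I_subset] by (simp add: card_Diff_subset)

lemma Is_nth: "i < d \<Longrightarrow> Is ! i \<in> I" "i < d \<Longrightarrow> Is ! i < n"
  using length_Is I_subset finite_subset[OF I_subset] nth_mem[of i Is] by auto

lemma Js_nth: "j < m \<Longrightarrow> Js ! j \<notin> I" "j < m \<Longrightarrow> Js ! j < n"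
  using length_Js nth_mem[of j Js] by auto

lemma coordinate_cases:
  assumes "k < n"
  shows "(\<exists>i<d. Is ! i = k) \<or> (\<exists>j<m. Js ! j = k)"
proof (cases "k \<in> I")
  case True
  then have "k \<in> set Is" using finite_subset[OF I_subset] by simp
  then show ?thesis using length_Is by (metis in_set_conv_nth)
next
  case False
  then have "k \<in> set Js" using assms by simp
  then show ?thesis using length_Js by (metis in_set_conv_nth)
qed

lemma length_proj_I: "length (proj I x) = d"
  unfolding proj_def using length_Is by simp

lemma length_proj_J: "length (proj J x) = m"
  unfolding proj_def using length_Js by simp

lemma nth_proj_I: "i < d \<Longrightarrow> proj I x ! i = x ! (Is ! i)"
  unfolding proj_def using length_Is by simp

lemma nth_proj_J: "j < m \<Longrightarrow> proj J x ! j = x ! (Js ! j)"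
  unfolding proj_def using length_Js by simp

lemma proj_I_eq_iff: "length t = d \<Longrightarrow> proj I x = t \<longleftrightarrow> (\<forall>i<d. x ! (Is ! i) = t ! i)"
  by (metis length_proj_I nth_equalityI nth_proj_I)

lemma proj_I_psi: "length y = n \<Longrightarrow> proj I (psi \<phi> I y) = proj I y"
  by (intro nth_equalityI) (auto simp: length_proj_I nth_proj_I psi_def Is_nth)

lemma nth_proj_J_psi: "length y = n \<Longrightarrow> j < m \<Longrightarrow> proj J (psi \<phi> I y) ! j = \<phi> (y ! (Js ! j))"
  by (auto simp: nth_proj_J psi_def Js_nth)

lemma ex_proj_eq:
  assumes "length a = d" "length c = m"
  shows "\<exists>y. length y = n \<and> proj I y = a \<and> proj J y = c"
proof -
  define y where "y = map (\<lambda>k. if k \<in> I then a ! (THE i. i < d \<and> Is ! i = k)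
    else c ! (THE j. j < m \<and> Js ! j = k)) [0..<n]"
  have "(THE i'. i' < d \<and> Is ! i' = Is ! i) = i" if "i < d" for i
    using that length_Is by (intro the_equality) (auto simp: nth_eq_iff_index_eq)
  then have "proj I y = a"
    using assms by (intro nth_equalityI) (auto simp: length_proj_I nth_proj_I y_def Is_nth)
  moreover have "(THE j'. j' < m \<and> Js ! j' = Js ! j) = j" if "j < m" for j
    using that length_Js by (intro the_equality) (auto simp: nth_eq_iff_index_eq)
  then have "proj J y = c"
    using assms by (intro nth_equalityI) (auto simp: length_proj_J nth_proj_J y_def Js_nth)
  ultimately show ?thesis by (intro exI[of _ y]) (simp add: y_def)
qed

end

section \<open>Infima of a definable function over the fibres of a special submanifold\<close>

lemma def_homeo_01_range: "def_homeo_01 D \<phi> \<Longrightarrow> 0 < \<phi> t \<and> \<phi> t < 1"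
  unfolding def_homeo_01_def bij_betw_def by auto

lemma def_homeo_01_inv_close:
  assumes homeo: "def_homeo_01 D \<phi>" and "e > 0"
  shows "\<exists>\<epsilon>>0. \<forall>t. \<bar>\<phi> t - \<phi> t0\<bar> < \<epsilon> \<longrightarrow> \<bar>t - t0\<bar> < e"
proof -
  have inv: "inv \<phi> (\<phi> t) = t" for t
    using homeo unfolding def_homeo_01_def bij_betw_def by (simp add: inv_f_f)
  have "\<phi> t0 \<in> {0<..<1}" using def_homeo_01_range[OF homeo] by auto
  then obtain \<epsilon> where "\<epsilon> > 0"
    "\<forall>w\<in>{0<..<1}. \<bar>w - \<phi> t0\<bar> < \<epsilon> \<longrightarrow> \<bar>inv \<phi> w - inv \<phi> (\<phi> t0)\<bar> < e"
    using homeo \<open>e > 0\<close> unfolding def_homeo_01_def continuous1_def by blast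
  then show ?thesis using def_homeo_01_range[OF homeo] inv by (intro exI[of _ \<epsilon>]) auto
qed

locale special_fibers = definably_complete_sets D + coordinate_split n d I
  for D :: "nat \<Rightarrow> ('a::linordered_field) list set set" and n d :: nat and I :: "nat set" +
  fixes \<phi> :: "'a \<Rightarrow> 'a" and X :: "'a list set" and f :: "'a list \<Rightarrow> 'a"
  assumes homeo: "def_homeo_01 D \<phi>"
    and X_in_D: "X \<in> D n"
    and special: "special_submanifold D \<phi> n I X"
    and f_pos: "\<forall>x\<in>X. 0 < f x"
    and f_definable: "def_map D n 1 X (\<lambda>x. [f x])"
    and f_continuous: "continuous_Fn n 1 X (\<lambda>x. [f x])"
begin

definition fiber_values :: "'a list \<Rightarrow> 'a set" where
  "fiber_values t = {f x | x. x \<in> X \<and> proj I x = t}"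

definition fiber_inf :: "'a list \<Rightarrow> 'a" where
  "fiber_inf t = (SOME s. is_inf_of (fiber_values t) s)"

lemma length_X: "x \<in> X \<Longrightarrow> length x = n"
  using D_subset_Fn[OF X_in_D] unfolding Fn_def by auto

lemma definable_bex_graph:
  assumes P: "definable D (N + Suc n) (\<lambda>y. P (take N y) (take n (drop N y)) (y ! (N + n)))"
  shows "definable D N (\<lambda>z. \<exists>x\<in>X. P z x (f x))"
proof -
  let ?G = "{x @ [f x] | x. x \<in> X}"
  have "?G \<in> D (n + 1)" using f_definable unfolding def_map_def by simp
  then have "definable D (N + Suc n) (\<lambda>y. map ((!) y) [N..<N + Suc n] \<in> ?G \<and>
      P (take N y) (take n (drop N y)) (y ! (N + n)))"
    by (intro definable_conj definable_map_nth_mem P) auto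
  from definable_ex_append[OF this] show ?thesis
  proof (rule definable_cong)
    fix z :: "'a list" assume z: "length z = N"
    have block: "map ((!) (z @ ws)) [N..<Suc (N + n)] = ws" if "length ws = Suc n" for ws
      using map_nth_append_upt[OF z that] by simp
    have "(\<exists>ws. length ws = Suc n \<and> map ((!) (z @ ws)) [N..<N + Suc n] \<in> ?G \<and>
        P (take N (z @ ws)) (take n (drop N (z @ ws))) ((z @ ws) ! (N + n))) \<longleftrightarrow>
        (\<exists>ws. length ws = Suc n \<and> ws \<in> ?G \<and> P z (take n ws) (ws ! n))"
      using z by (intro ex_cong1 conj_cong refl) (simp_all add: block nth_append del: upt_Suc)
    also have "\<dots> \<longleftrightarrow> (\<exists>x\<in>X. P z x (f x))"
    proof
      assume "\<exists>ws. length ws = Suc n \<and> ws \<in> ?G \<and> P z (take n ws) (ws ! n)"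
      then obtain x where x: "x \<in> X" "P z (take n (x @ [f x])) ((x @ [f x]) ! n)" by blast
      moreover from x(1) have "length x = n" by (rule length_X)
      ultimately show "\<exists>x\<in>X. P z x (f x)" by auto
    next
      assume "\<exists>x\<in>X. P z x (f x)"
      then obtain x where "x \<in> X" "P z x (f x)" by blast
      then show "\<exists>ws. length ws = Suc n \<and> ws \<in> ?G \<and> P z (take n ws) (ws ! n)"
        using length_X by (intro exI[of _ "x @ [f x]"]) (auto simp: nth_append)
    qed
    finally show "(\<exists>ws. length ws = Suc n \<and> map ((!) (z @ ws)) [N..<N + Suc n] \<in> ?G \<and>
        P (take N (z @ ws)) (take n (drop N (z @ ws))) ((z @ ws) ! (N + n))) = (\<exists>x\<in>X. P z x (f x))" .
  qed
qed

lemma definable_ball_graph: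
  assumes "definable D (N + Suc n) (\<lambda>y. P (take N y) (take n (drop N y)) (y ! (N + n)))"
  shows "definable D N (\<lambda>z. \<forall>x\<in>X. P z x (f x))"
  using definable_Not[OF definable_bex_graph[OF definable_Not[OF assms]]] by simp


lemma definable_fiber_values: "definable D (Suc d) (\<lambda>z. z ! d \<in> fiber_values (take d z))"
proof -
  have "definable D (Suc d + Suc n) (\<lambda>y. (\<forall>i<d. y ! (Suc d + Is ! i) = y ! i) \<and> y ! d = y ! (Suc d + n))"
    by (intro definable_conj definable_all_less definable_nth_eq_nth) (auto intro: less_SucI Is_nth)
  then have "definable D (Suc d + Suc n) (\<lambda>y. proj I (take n (drop (Suc d) y)) = take d (take (Suc d) y)
      \<and> take (Suc d) y ! d = y ! (Suc d + n))"
    by (rule definable_cong) (auto simp: proj_I_eq_iff Is_nth)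
  from definable_bex_graph[OF this] show ?thesis
    by (rule definable_cong) (auto simp: fiber_values_def)
qed

lemma fiber_inf_is_inf: "t \<in> proj I ` X \<Longrightarrow> is_inf_of (fiber_values t) (fiber_inf t)"
proof -
  assume "t \<in> proj I ` X"
  then obtain x0 where x0: "x0 \<in> X" "proj I x0 = t" by blast
  then have t: "length t = d" using length_proj_I by blast
  have "definable D (d + 1) (\<lambda>z. z ! d \<in> fiber_values (take d z))"
    using definable_fiber_values by simp
  from definable_fix_prefix[OF this t]
  have "definable D 1 (\<lambda>z. z ! 0 \<in> fiber_values t)"
    by (rule definable_cong) (simp add: t nth_append)
  moreover have "f x0 \<in> fiber_values t" using x0 unfolding fiber_values_def by blast
  moreover have "\<forall>v. v \<in> fiber_values t \<longrightarrow> 0 \<le> v"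
    using f_pos unfolding fiber_values_def by (auto simp: less_imp_le)
  ultimately have "\<exists>s. is_inf_of (fiber_values t) s"
    using definable_has_inf[of "\<lambda>v. v \<in> fiber_values t"] by simp
  then show ?thesis unfolding fiber_inf_def by (rule someI_ex)
qed

lemma fiber_inf_graph_in_D: "{t @ [fiber_inf t] | t. t \<in> proj I ` X} \<in> D (Suc d)"
proof -
  have "definable D (Suc d) (\<lambda>z. is_inf_of {v. v \<in> fiber_values (take d z)} (z ! d))"
    by (rule definable_is_inf_of[OF definable_fiber_values])
  moreover have "{t @ [fiber_inf t] | t. t \<in> proj I ` X} =
      {z \<in> Fn (Suc d). is_inf_of (fiber_values (take d z)) (z ! d)}"
  proof (rule set_eqI, rule iffI)
    fix z assume "z \<in> {t @ [fiber_inf t] | t. t \<in> proj I ` X}"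
    then obtain t where "t \<in> proj I ` X" "z = t @ [fiber_inf t]" by blast
    then show "z \<in> {z \<in> Fn (Suc d). is_inf_of (fiber_values (take d z)) (z ! d)}"
      using fiber_inf_is_inf length_proj_I unfolding Fn_def by (auto simp: nth_append)
  next
    fix z assume z: "z \<in> {z \<in> Fn (Suc d). is_inf_of (fiber_values (take d z)) (z ! d)}"
    then have inf: "is_inf_of (fiber_values (take d z)) (z ! d)" by blast
    obtain v where "v \<in> fiber_values (take d z)" using is_inf_of_nonempty[OF inf] by blast
    then have base: "take d z \<in> proj I ` X" unfolding fiber_values_def by (auto intro: sym)
    then have "z ! d = fiber_inf (take d z)"
      using is_inf_of_unique[OF inf fiber_inf_is_inf] by blast
    moreover have "z = take d z @ [z ! d]"
      using z unfolding Fn_def by (simp add: take_Suc_conv_app_nth[symmetric])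
    ultimately show "z \<in> {t @ [fiber_inf t] | t. t \<in> proj I ` X}" using base by auto
  qed
  ultimately show ?thesis unfolding definable_def by simp
qed

lemma definable_abs_phi_diff_less:
  assumes "p < N" "j < N" "q < N"
  shows "definable D N (\<lambda>y. \<bar>\<phi> (y ! p) - y ! j\<bar> < y ! q)"
proof -
  have "{[t, \<phi> t] | t. True} \<in> D 2" using homeo unfolding def_homeo_01_def by blast
  then have "definable D (Suc N) (\<lambda>u. map ((!) u) [p, N] \<in> {[t, \<phi> t] | t. True} \<and>
      \<bar>u ! N - u ! j\<bar> < u ! q)"
    using assms by (intro definable_conj definable_map_nth_mem definable_abs_diff_less)
      (auto simp: numeral_2_eq_2)
  from definable_ex_snoc[OF this] show ?thesis
    by (rule definable_cong) (use assms in \<open>auto simp: nth_append\<close>)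
qed

definition lower_margin :: "'a list \<Rightarrow> 'a \<Rightarrow> 'a list \<Rightarrow> 'a \<Rightarrow> bool" where
  "lower_margin t0 L b r \<longleftrightarrow> 0 < r \<and> (\<forall>x\<in>X. (\<forall>i<d. \<bar>proj I x ! i - t0 ! i\<bar> < r) \<and>
     (\<forall>j<m. \<bar>proj J (psi \<phi> I x) ! j - b ! j\<bar> < r) \<longrightarrow> L + r \<le> f x)"

lemma definable_lower_margin: "definable D (Suc m) (\<lambda>z. lower_margin t0 L (take m z) (z ! m))"
proof -
  let ?N = "Suc m"
  have Is_offset: "?N + Is ! i < ?N + Suc n" if "i < d" for i using Is_nth(2)[OF that] by simp
  have Js_offset: "?N + Js ! j < ?N + Suc n" if "j < m" for j using Js_nth(2)[OF that] by simp
  have "definable D (?N + Suc n) (\<lambda>y. (\<forall>i<d. \<bar>y ! (?N + Is ! i) - t0 ! i\<bar> < y ! m) \<and>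
      (\<forall>j<m. \<bar>\<phi> (y ! (?N + Js ! j)) - y ! j\<bar> < y ! m) \<longrightarrow> L + y ! m \<le> y ! (?N + n))"
    by (intro definable_imp definable_conj definable_all_less definable_abs_diff_const_less
        definable_abs_phi_diff_less definable_const_add_le) (use Is_offset Js_offset in auto)
  then have "definable D (?N + Suc n) (\<lambda>y.
      (\<forall>i<d. \<bar>proj I (take n (drop ?N y)) ! i - t0 ! i\<bar> < take ?N y ! m) \<and>
      (\<forall>j<m. \<bar>proj J (psi \<phi> I (take n (drop ?N y))) ! j - take ?N y ! j\<bar> < take ?N y ! m) \<longrightarrow>
      L + take ?N y ! m \<le> y ! (?N + n))"
    by (rule definable_cong) (auto simp: nth_proj_I nth_proj_J_psi Is_nth Js_nth)
  from definable_conj[OF definable_const_less_nth[OF lessI[of m], of 0] definable_ball_graph[OF this]]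
  show ?thesis by (rule definable_cong) (auto simp: lower_margin_def)
qed

text \<open>The two alternatives in the definition of a \<open>(\<psi>(X), \<pi>)\<close>-normal point.\<close>
definition psi_box :: "'a list set \<Rightarrow> 'a list set \<Rightarrow> 'a list set" where
  "psi_box A B = {y \<in> psi \<phi> I ` X. proj I y \<in> A \<and> proj J y \<in> B}"

definition graph_over :: "'a list set \<Rightarrow> ('a list \<Rightarrow> 'a list) \<Rightarrow> 'a list set" where
  "graph_over A h = {y \<in> Fn n. proj I y \<in> A \<and> proj J y = h (proj I y)}"

lemma normal_nbhds:
  assumes "t0 \<in> proj I ` X" "length b = m"
  shows "\<exists>A B. open_Fn d A \<and> t0 \<in> A \<and> open_Fn m B \<and> b \<in> B \<and> (psi_box A B = {} \<or>
     (\<exists>h. (\<forall>a\<in>A. h a \<in> B) \<and> continuous_Fn d m A h \<and> psi_box A B = graph_over A h))"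
proof -
  have "good_pt D \<phi> n I X t0" using special assms(1) unfolding special_submanifold_def by blast
  moreover have "b \<in> Fn (n - card I)" using assms(2) card_I unfolding Fn_def by simp
  ultimately have "normal_pt D n I (psi \<phi> I ` X) t0 b" unfolding good_pt_def by blast
  then show ?thesis unfolding normal_pt_def Let_def card_I psi_box_def graph_over_def by blast
qed

lemma psi_in_psi_box:
  "x \<in> X \<Longrightarrow> proj I x \<in> A \<Longrightarrow> proj J (psi \<phi> I x) \<in> B \<Longrightarrow> psi \<phi> I x \<in> psi_box A B"
  unfolding psi_box_def using proj_I_psi[OF length_X] by auto

lemma psi_box_graph_eq:
  assumes "psi_box A B = graph_over A h" "x \<in> X" "proj I x \<in> A" "proj J (psi \<phi> I x) \<in> B"
  shows "proj J (psi \<phi> I x) = h (proj I x)"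
  using psi_in_psi_box[OF assms(2-4)] assms(1,2) proj_I_psi[OF length_X]
  unfolding graph_over_def by auto

lemma psi_box_graph_point:
  assumes "psi_box A B = graph_over A h" "\<forall>a\<in>A. h a \<in> B"
    and "open_Fn d A" "open_Fn m B" "t \<in> A"
  shows "\<exists>x\<in>X. proj I x = t \<and> proj J (psi \<phi> I x) \<in> B"
proof -
  have "length t = d" "length (h t) = m"
    using assms(2-5) unfolding open_Fn_def Fn_def by auto
  then obtain y where y: "length y = n" "proj I y = t" "proj J y = h t"
    using ex_proj_eq by blast
  then have "y \<in> psi_box A B" using assms(1,5) unfolding graph_over_def Fn_def by simp
  then obtain x where "x \<in> X" "y = psi \<phi> I x" "proj J y \<in> B" unfolding psi_box_def by blast
  then show ?thesis using y(2) proj_I_psi[OF length_X] by metis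
qed

text \<open>Inside a box where \<open>\<psi>(X)\<close> is the graph of \<open>h\<close>, the \<open>J\<close>-coordinates of a point
  of \<open>X\<close> are \<open>\<phi>\<^sup>-\<^sup>1\<close> of those of \<open>h\<close>, so continuity of \<open>h\<close> and of \<open>\<phi>\<^sup>-\<^sup>1\<close>
  controls them by the \<open>I\<close>-coordinates.\<close>
lemma psi_box_graph_close:
  assumes h: "continuous_Fn d m A h" "psi_box A B = graph_over A h"
    and x0: "x0 \<in> X" "proj I x0 \<in> A" "proj J (psi \<phi> I x0) \<in> B" and "e > 0"
  shows "\<exists>\<rho>>0. \<forall>x\<in>X. proj I x \<in> A \<longrightarrow> proj J (psi \<phi> I x) \<in> B \<longrightarrow>
           (\<forall>i<d. \<bar>proj I x ! i - proj I x0 ! i\<bar> < \<rho>) \<longrightarrow> (\<forall>k<n. \<bar>x ! k - x0 ! k\<bar> < e)"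
proof -
  have "\<exists>\<epsilon>>0. \<forall>j<m. \<forall>t. \<bar>\<phi> t - \<phi> (x0 ! (Js ! j))\<bar> < \<epsilon> \<longrightarrow> \<bar>t - x0 ! (Js ! j)\<bar> < e"
    using def_homeo_01_inv_close[OF homeo \<open>e > 0\<close>] by (rule ex_pos_forall_less) fastforce
  then obtain \<epsilon> where \<epsilon>: "\<epsilon> > 0"
    "\<forall>j<m. \<forall>t. \<bar>\<phi> t - \<phi> (x0 ! (Js ! j))\<bar> < \<epsilon> \<longrightarrow> \<bar>t - x0 ! (Js ! j)\<bar> < e" by blast
  obtain \<delta> where \<delta>: "\<delta> > 0" "\<forall>a\<in>A. (\<forall>i<d. \<bar>a ! i - proj I x0 ! i\<bar> < \<delta>) \<longrightarrow>
      (\<forall>j<m. \<bar>h a ! j - h (proj I x0) ! j\<bar> < \<epsilon>)"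
    using h(1) x0(2) \<epsilon>(1) unfolding continuous_Fn_def by blast
  have "\<forall>k<n. \<bar>x ! k - x0 ! k\<bar> < e"
    if x: "x \<in> X" "proj I x \<in> A" "proj J (psi \<phi> I x) \<in> B"
      and close: "\<forall>i<d. \<bar>proj I x ! i - proj I x0 ! i\<bar> < min \<delta> e" for x
  proof -
    have "\<bar>h (proj I x) ! j - h (proj I x0) ! j\<bar> < \<epsilon>" if "j < m" for j
      using \<delta>(2) x(2) close that by auto
    then have "\<bar>\<phi> (x ! (Js ! j)) - \<phi> (x0 ! (Js ! j))\<bar> < \<epsilon>" if "j < m" for j
      using that psi_box_graph_eq[OF h(2) x] psi_box_graph_eq[OF h(2) x0]
        nth_proj_J_psi[OF length_X[OF x(1)]] nth_proj_J_psi[OF length_X[OF x0(1)]] by metis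
    then have J_close: "\<bar>x ! (Js ! j) - x0 ! (Js ! j)\<bar> < e" if "j < m" for j
      using \<epsilon>(2) that by blast
    have I_close: "\<bar>x ! (Is ! i) - x0 ! (Is ! i)\<bar> < e" if "i < d" for i
      using close that by (auto simp: nth_proj_I)
    show ?thesis using coordinate_cases I_close J_close by blast
  qed
  then show ?thesis using \<delta>(1) \<open>e > 0\<close> by (intro exI[of _ "min \<delta> e"]) auto
qed

lemma f_close_on_psi_box_graph:
  assumes "continuous_Fn d m A h" "psi_box A B = graph_over A h"
    and "x0 \<in> X" "proj I x0 \<in> A" "proj J (psi \<phi> I x0) \<in> B" and "q > 0"
  shows "\<exists>\<rho>>0. \<forall>x\<in>X. proj I x \<in> A \<longrightarrow> proj J (psi \<phi> I x) \<in> B \<longrightarrow>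
           (\<forall>i<d. \<bar>proj I x ! i - proj I x0 ! i\<bar> < \<rho>) \<longrightarrow> \<bar>f x - f x0\<bar> < q"
proof -
  obtain e where "e > 0" "\<forall>x\<in>X. (\<forall>k<n. \<bar>x ! k - x0 ! k\<bar> < e) \<longrightarrow> \<bar>f x - f x0\<bar> < q"
    using f_continuous assms(3,6) unfolding continuous_Fn_def by fastforce
  with psi_box_graph_close[OF assms(1-5) \<open>e > 0\<close>] show ?thesis by meson
qed

lemma lower_margin_shrink:
  assumes "lower_margin t0 L b r" "0 < r'" "r' \<le> r"
  shows "lower_margin t0 L b r'"
  unfolding lower_margin_def
proof (intro conjI ballI impI)
  fix x assume "x \<in> X" "(\<forall>i<d. \<bar>proj I x ! i - t0 ! i\<bar> < r') \<and>
      (\<forall>j<m. \<bar>proj J (psi \<phi> I x) ! j - b ! j\<bar> < r')"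
  then have "L + r \<le> f x"
    using assms(1,3) unfolding lower_margin_def by (meson order_less_le_trans)
  then show "L + r' \<le> f x" using assms(3) by simp
qed (rule assms(2))

lemma lower_margin_stable:
  assumes "lower_margin t0 L b r" "0 < s" "s \<le> r" "\<forall>j<m. \<bar>b' ! j - b ! j\<bar> + s \<le> r"
  shows "lower_margin t0 L b' s"
  unfolding lower_margin_def
proof (intro conjI ballI impI)
  fix x assume x: "x \<in> X" and close: "(\<forall>i<d. \<bar>proj I x ! i - t0 ! i\<bar> < s) \<and>
      (\<forall>j<m. \<bar>proj J (psi \<phi> I x) ! j - b' ! j\<bar> < s)"
  have "\<bar>proj J (psi \<phi> I x) ! j - b ! j\<bar> < r" if "j < m" for j
  proof -
    have "\<bar>proj J (psi \<phi> I x) ! j - b ! j\<bar>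
        \<le> \<bar>proj J (psi \<phi> I x) ! j - b' ! j\<bar> + \<bar>b' ! j - b ! j\<bar>"
      using abs_triangle_ineq[of "proj J (psi \<phi> I x) ! j - b' ! j" "b' ! j - b ! j"] by simp
    also have "\<dots> < s + \<bar>b' ! j - b ! j\<bar>" using close that by simp
    also have "\<dots> \<le> r" using assms(4) that by (simp add: add.commute)
    finally show ?thesis .
  qed
  moreover have "\<forall>i<d. \<bar>proj I x ! i - t0 ! i\<bar> < r" using close assms(3) by fastforce
  ultimately have "L + r \<le> f x" using assms(1) x unfolding lower_margin_def by blast
  then show "L + s \<le> f x" using assms(3) by simp
qed (rule assms(2))

lemma psi_box_graph_margin:
  assumes h: "\<forall>a\<in>A. h a \<in> B" "continuous_Fn d m A h" "psi_box A B = graph_over A h"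
    and AB: "open_Fn d A" "open_Fn m B" "t0 \<in> A"
    and L: "\<forall>x\<in>X. proj I x = t0 \<longrightarrow> L < f x"
  shows "\<exists>\<rho>>0. \<forall>x\<in>X. proj I x \<in> A \<longrightarrow> proj J (psi \<phi> I x) \<in> B \<longrightarrow>
           (\<forall>i<d. \<bar>proj I x ! i - t0 ! i\<bar> < \<rho>) \<longrightarrow> L + \<rho> \<le> f x"
proof -
  obtain x0 where x0: "x0 \<in> X" "proj I x0 = t0" "proj J (psi \<phi> I x0) \<in> B"
    using psi_box_graph_point[OF h(3,1) AB] by blast
  define q where "q = (f x0 - L) / 2"
  have q: "q > 0" "L + q = f x0 - q" using L x0 unfolding q_def by (auto simp: field_simps)
  obtain \<rho> where \<rho>: "\<rho> > 0" "\<forall>x\<in>X. proj I x \<in> A \<longrightarrow> proj J (psi \<phi> I x) \<in> B \<longrightarrow>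
      (\<forall>i<d. \<bar>proj I x ! i - t0 ! i\<bar> < \<rho>) \<longrightarrow> \<bar>f x - f x0\<bar> < q"
    using f_close_on_psi_box_graph[OF h(2,3) x0(1) _ x0(3) q(1)] x0(2) AB(3) by blast
  have "L + min \<rho> q \<le> f x"
    if "x \<in> X" "proj I x \<in> A" "proj J (psi \<phi> I x) \<in> B"
      "\<forall>i<d. \<bar>proj I x ! i - t0 ! i\<bar> < min \<rho> q" for x
  proof -
    have "\<bar>f x - f x0\<bar> < q" using \<rho>(2) that by auto
    then show ?thesis using q(2) by (auto simp: abs_less_iff)
  qed
  moreover have "min \<rho> q > 0" using \<rho>(1) q(1) by simp
  ultimately show ?thesis by blast
qed

lemma lower_margin_local:
  assumes t0: "t0 \<in> proj I ` X" and L: "\<forall>x\<in>X. proj I x = t0 \<longrightarrow> L < f x" and b: "length b = m"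
  shows "\<exists>r>0. lower_margin t0 L b r"
proof -
  obtain A B where AB: "open_Fn d A" "t0 \<in> A" "open_Fn m B" "b \<in> B"
    and cases: "psi_box A B = {} \<or>
      (\<exists>h. (\<forall>a\<in>A. h a \<in> B) \<and> continuous_Fn d m A h \<and> psi_box A B = graph_over A h)"
    using normal_nbhds[OF t0 b] by blast
  obtain eA where eA: "eA > 0" "\<forall>y. length y = d \<longrightarrow> (\<forall>i<d. \<bar>y ! i - t0 ! i\<bar> < eA) \<longrightarrow> y \<in> A"
    using open_Fn_cube_nbhd[OF AB(1,2)] by blast
  obtain eB where eB: "eB > 0" "\<forall>y. length y = m \<longrightarrow> (\<forall>j<m. \<bar>y ! j - b ! j\<bar> < eB) \<longrightarrow> y \<in> B"
    using open_Fn_cube_nbhd[OF AB(3,4)] by blast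
  have "\<exists>\<rho>>0. \<forall>x\<in>X. proj I x \<in> A \<longrightarrow> proj J (psi \<phi> I x) \<in> B \<longrightarrow>
           (\<forall>i<d. \<bar>proj I x ! i - t0 ! i\<bar> < \<rho>) \<longrightarrow> L + \<rho> \<le> f x"
    using cases psi_in_psi_box psi_box_graph_margin[OF _ _ _ AB(1,3,2) L] by (metis equals0D zero_less_one)
  then obtain \<rho> where \<rho>: "\<rho> > 0" "\<forall>x\<in>X. proj I x \<in> A \<longrightarrow> proj J (psi \<phi> I x) \<in> B \<longrightarrow>
      (\<forall>i<d. \<bar>proj I x ! i - t0 ! i\<bar> < \<rho>) \<longrightarrow> L + \<rho> \<le> f x" by blast
  define r where "r = min (min eA eB) \<rho>"
  have "L + r \<le> f x"
    if "x \<in> X" "\<forall>i<d. \<bar>proj I x ! i - t0 ! i\<bar> < r" "\<forall>j<m. \<bar>proj J (psi \<phi> I x) ! j - b ! j\<bar> < r" for x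
  proof -
    have "proj I x \<in> A" using eA(2) that(2) length_proj_I unfolding r_def by auto
    moreover have "proj J (psi \<phi> I x) \<in> B" using eB(2) that(3) length_proj_J unfolding r_def by auto
    moreover have "\<forall>i<d. \<bar>proj I x ! i - t0 ! i\<bar> < \<rho>" using that(2) unfolding r_def by auto
    ultimately have "L + \<rho> \<le> f x" using \<rho>(2) that(1) by blast
    then show ?thesis unfolding r_def by linarith
  qed
  moreover have "r > 0" using eA(1) eB(1) \<rho>(1) unfolding r_def by simp
  ultimately show ?thesis unfolding lower_margin_def by blast
qed

lemma lower_margin_uniform:
  assumes "t0 \<in> proj I ` X" "\<forall>x\<in>X. proj I x = t0 \<longrightarrow> L < f x"
  shows "\<exists>r>0. \<forall>b\<in>unit_cube m. lower_margin t0 L b r"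
proof (rule uniform_radius_unit_cube[OF definable_lower_margin])
  show "lower_margin t0 L b r'" if "lower_margin t0 L b r" "0 < r'" "r' \<le> r" for b r r'
    using that by (rule lower_margin_shrink)
  show "lower_margin t0 L b' s" if "length b = m" "length b' = m" "lower_margin t0 L b r" "0 < s"
    "s \<le> r" "\<forall>j<m. \<bar>b' ! j - b ! j\<bar> + s \<le> r" for b b' r s
    using that(3-6) by (rule lower_margin_stable)
  show "\<exists>r>0. lower_margin t0 L b r" if "b \<in> unit_cube m" for b
    using that lower_margin_local[OF assms] unfolding unit_cube_def by blast
qed

lemma fiber_inf_le: "proj I x \<in> proj I ` X \<Longrightarrow> x \<in> X \<Longrightarrow> fiber_inf (proj I x) \<le> f x"
  using fiber_inf_is_inf unfolding is_inf_of_def fiber_values_def by blast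

lemma fiber_inf_greatest:
  "t \<in> proj I ` X \<Longrightarrow> \<forall>x\<in>X. proj I x = t \<longrightarrow> c \<le> f x \<Longrightarrow> c \<le> fiber_inf t"
  using fiber_inf_is_inf unfolding is_inf_of_def fiber_values_def by blast

lemma proj_J_psi_in_unit_cube: "x \<in> X \<Longrightarrow> proj J (psi \<phi> I x) \<in> unit_cube m"
  using def_homeo_01_range[OF homeo] length_X
  unfolding unit_cube_def by (auto simp: length_proj_J nth_proj_J_psi less_imp_le)

text \<open>The fibre coordinates of \<open>\<psi>(X)\<close> lie in the unit cube, so the local margins provided by
  normality combine, by definable compactness, to one margin for the whole fibre.\<close>
lemma fiber_inf_lower_near:
  assumes "t0 \<in> proj I ` X" "\<forall>x\<in>X. proj I x = t0 \<longrightarrow> L < f x"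
  shows "\<exists>r>0. \<forall>t\<in>proj I ` X. (\<forall>i<d. \<bar>t ! i - t0 ! i\<bar> < r) \<longrightarrow> L + r \<le> fiber_inf t"
proof -
  obtain r where r: "r > 0" "\<forall>b\<in>unit_cube m. lower_margin t0 L b r"
    using lower_margin_uniform[OF assms] by blast
  have "L + r \<le> f x" if "x \<in> X" "\<forall>i<d. \<bar>proj I x ! i - t0 ! i\<bar> < r" for x
  proof -
    have "lower_margin t0 L (proj J (psi \<phi> I x)) r"
      using r(2) proj_J_psi_in_unit_cube[OF that(1)] by blast
    moreover have "\<forall>j<m. \<bar>proj J (psi \<phi> I x) ! j - proj J (psi \<phi> I x) ! j\<bar> < r"
      using r(1) by simp
    ultimately show ?thesis using that unfolding lower_margin_def by blast
  qed
  then have "L + r \<le> fiber_inf t" if "t \<in> proj I ` X" "\<forall>i<d. \<bar>t ! i - t0 ! i\<bar> < r" for t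
    using fiber_inf_greatest[OF that(1)] that(2) by blast
  then show ?thesis using r(1) by blast
qed

lemma fiber_inf_pos: "t \<in> proj I ` X \<Longrightarrow> 0 < fiber_inf t"
  using fiber_inf_lower_near[of t 0] f_pos by fastforce

lemma fiber_inf_upper_near:
  assumes t0: "t0 \<in> proj I ` X" and "e > 0"
  shows "\<exists>\<delta>>0. \<forall>t\<in>proj I ` X. (\<forall>i<d. \<bar>t ! i - t0 ! i\<bar> < \<delta>) \<longrightarrow> fiber_inf t < fiber_inf t0 + e"
proof -
  have "\<exists>x0\<in>X. proj I x0 = t0 \<and> f x0 < fiber_inf t0 + e"
  proof (rule ccontr)
    assume "\<not> ?thesis"
    then have "\<forall>x\<in>X. proj I x = t0 \<longrightarrow> fiber_inf t0 + e \<le> f x" by (auto simp: not_less)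
    then have "fiber_inf t0 + e \<le> fiber_inf t0" by (rule fiber_inf_greatest[OF t0])
    then show False using \<open>e > 0\<close> by simp
  qed
  then obtain x0 where x0: "x0 \<in> X" "proj I x0 = t0" "f x0 < fiber_inf t0 + e" by blast
  obtain A B where AB: "open_Fn d A" "t0 \<in> A" "open_Fn m B" "proj J (psi \<phi> I x0) \<in> B"
    and cases: "psi_box A B = {} \<or>
      (\<exists>h. (\<forall>a\<in>A. h a \<in> B) \<and> continuous_Fn d m A h \<and> psi_box A B = graph_over A h)"
    using normal_nbhds[OF t0 length_proj_J[of "psi \<phi> I x0"]] by blast
  have "psi \<phi> I x0 \<in> psi_box A B" using psi_in_psi_box[OF x0(1) _ AB(4)] x0(2) AB(2) by simp
  then obtain h where h: "\<forall>a\<in>A. h a \<in> B" "continuous_Fn d m A h" "psi_box A B = graph_over A h"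
    using cases by blast
  have "proj I x0 \<in> A" "0 < fiber_inf t0 + e - f x0" using x0(2,3) AB(2) by auto
  from f_close_on_psi_box_graph[OF h(2,3) x0(1) this(1) AB(4) this(2)]
  obtain \<rho> where \<rho>: "\<rho> > 0" "\<forall>x\<in>X. proj I x \<in> A \<longrightarrow> proj J (psi \<phi> I x) \<in> B \<longrightarrow>
      (\<forall>i<d. \<bar>proj I x ! i - t0 ! i\<bar> < \<rho>) \<longrightarrow> \<bar>f x - f x0\<bar> < fiber_inf t0 + e - f x0"
    unfolding x0(2) by blast
  obtain eA where eA: "eA > 0" "\<forall>y. length y = d \<longrightarrow> (\<forall>i<d. \<bar>y ! i - t0 ! i\<bar> < eA) \<longrightarrow> y \<in> A"
    using open_Fn_cube_nbhd[OF AB(1,2)] by blast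
  have "fiber_inf t < fiber_inf t0 + e"
    if t: "t \<in> proj I ` X" "\<forall>i<d. \<bar>t ! i - t0 ! i\<bar> < min eA \<rho>" for t
  proof -
    have "length t = d" using t(1) length_proj_I by auto
    then have "t \<in> A" using eA(2) t(2) by simp
    then obtain x where x: "x \<in> X" "proj I x = t" "proj J (psi \<phi> I x) \<in> B"
      using psi_box_graph_point[OF h(3,1) AB(1,3)] by blast
    moreover have "\<forall>i<d. \<bar>proj I x ! i - t0 ! i\<bar> < \<rho>" using t(2) x(2) by simp
    ultimately have "\<bar>f x - f x0\<bar> < fiber_inf t0 + e - f x0"
      using \<rho>(2) \<open>t \<in> A\<close> by blast
    moreover have "fiber_inf t \<le> f x" using fiber_inf_le[of x] x t(1) by simp
    ultimately show ?thesis by (simp add: abs_less_iff)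
  qed
  moreover have "min eA \<rho> > 0" using eA(1) \<rho>(1) by simp
  ultimately show ?thesis by blast
qed

lemma fiber_inf_continuous: "continuous_Fn d 1 (proj I ` X) (\<lambda>t. [fiber_inf t])"
  unfolding continuous_Fn_def
proof (intro ballI allI impI)
  fix t0 and e :: 'a assume t0: "t0 \<in> proj I ` X" and "e > 0"
  have "\<forall>x\<in>X. proj I x = t0 \<longrightarrow> fiber_inf t0 - e < f x"
    using fiber_inf_le t0 \<open>e > 0\<close> by fastforce
  then obtain r where r: "r > 0"
    "\<forall>t\<in>proj I ` X. (\<forall>i<d. \<bar>t ! i - t0 ! i\<bar> < r) \<longrightarrow> fiber_inf t0 - e + r \<le> fiber_inf t"
    using fiber_inf_lower_near[OF t0] by blast
  obtain \<delta> where \<delta>: "\<delta> > 0"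
    "\<forall>t\<in>proj I ` X. (\<forall>i<d. \<bar>t ! i - t0 ! i\<bar> < \<delta>) \<longrightarrow> fiber_inf t < fiber_inf t0 + e"
    using fiber_inf_upper_near[OF t0 \<open>e > 0\<close>] by blast
  have "\<bar>fiber_inf t - fiber_inf t0\<bar> < e"
    if "t \<in> proj I ` X" "\<forall>i<d. \<bar>t ! i - t0 ! i\<bar> < min r \<delta>" for t
    using r(1) r(2)[rule_format, of t] \<delta>(2)[rule_format, of t] that by (auto simp: abs_less_iff)
  then show "\<exists>\<delta>>0. \<forall>t\<in>proj I ` X. (\<forall>i<d. \<bar>t ! i - t0 ! i\<bar> < \<delta>) \<longrightarrow>
      (\<forall>j<1. \<bar>[fiber_inf t] ! j - [fiber_inf t0] ! j\<bar> < e)"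
    using r(1) \<delta>(1) by (intro exI[of _ "min r \<delta>"]) auto
qed
end

theorem proposition2p9:
  fixes D :: "nat \<Rightarrow> ('a::linordered_field) list set set"
    and \<phi> :: "'a \<Rightarrow> 'a" and n d :: nat and I :: "nat set"
    and X :: "'a list set" and f :: "'a list \<Rightarrow> 'a"
  assumes "ofield_structure D" and "locally_o_minimal D" and "definably_complete D"
    and "def_homeo_01 D \<phi>"
    and "coord_proj n d I"
    and "X \<in> D n" and "has_dim n X d" and "special_submanifold D \<phi> n I X"
    and "\<forall>x\<in>X. 0 < f x"
    and "def_map D n 1 X (\<lambda>x. [f x])"
    and "continuous_Fn n 1 X (\<lambda>x. [f x])"
  shows "\<exists>g. (\<forall>t \<in> proj I ` X. is_inf_of {f x | x. x \<in> X \<and> proj I x = t} (g t)) \<and>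
             (\<forall>t \<in> proj I ` X. 0 < g t) \<and>
             def_map D d 1 (proj I ` X) (\<lambda>t. [g t]) \<and>
             continuous_Fn d 1 (proj I ` X) (\<lambda>t. [g t])"
proof -
  interpret special_fibers D n d I \<phi> X f
    using assms by unfold_locales
  show ?thesis
  proof (intro exI[of _ fiber_inf] conjI)
    show "\<forall>t\<in>proj I ` X. is_inf_of {f x |x. x \<in> X \<and> proj I x = t} (fiber_inf t)"
      using fiber_inf_is_inf unfolding fiber_values_def by blast
    show "\<forall>t\<in>proj I ` X. 0 < fiber_inf t" using fiber_inf_pos by blast
    show "def_map D d 1 (proj I ` X) (\<lambda>t. [fiber_inf t])"
      using fiber_inf_graph_in_D unfolding def_map_def Fn_def by simp
    show "continuous_Fn d 1 (proj I ` X) (\<lambda>t. [fiber_inf t])" by (rule fiber_inf_continuous)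
  qed
qed

end
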